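(* Let $V$ be a finite set of numeric variables, let $t$ be a linear term over $V$, and let $a \in \mathbb{R} \cup \{-\infty\}$, $b \in \mathbb{R} \cup \{\infty\}$ with $a \leq b$. Let $t' := t[V \mapsto V']$ and $\epsilon > 0$. Define $\mathit{base} := (a \leq t \leq b)$, $\mathit{conc} := \top$, $\mathit{stay} := (a \leq t' \leq b) \lor (t < a \land t \leq t' \leq b) \lor (t > b \land t \geq t' \geq a)$, and $\mathit{step} := (a \leq t' \leq b) \lor (t < a \land t + \epsilon \leq t' \leq b) \lor (t > b \land t - \epsilon \geq t' \geq a)$. Then $(\mathit{base}, \mathit{stay}, \mathit{step}, \mathit{conc})$ is a GAL over $V$.
   Context: The theory $T$ is linear arithmetic. For a set of variables $X$, $\mathcal{A}(X)$ denotes the set of assignments to $X$. $X' = \{x' \mid x \in X\}$ is a disjoint primed copy of $X$; for $\nu \in \mathcal{A}(X)$, $\nu' \in \mathcal{A}(X')$ is given by $\nu'(x') = \nu(x)$; for $\nu_1,\nu_2 \in \mathcal{A}(X)$, $\langle \nu_1,\nu_2\rangle := \nu_1 \uplus \nu_2'$. $\nu \models_T \alpha$ denotes entailment in $T$. $t[V\mapsto V']$ replaces each $v\in V$ by $v'$. A generalized acceleration lemma (GAL) over $V$ is a tuple $(\mathit{base}, \mathit{stay}, \mathit{step}, \mathit{conc})$ of first-order formulas with $\mathit{base}, \mathit{conc}$ having free variables in $V$ and $\mathit{stay}, \mathit{step}$ having free variables in $V \cup V'$, such that: (I) for every sequence $\alpha \in \mathcal{A}(V)^\omega$ with $\alpha[0]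 \models_T \mathit{conc}$, if (a) for all $i$, $\langle\alpha[i],\alpha[i+1]\rangle \models_T \mathit{step} \lor \mathit{stay}$, and (b) for all $i$ there is $j \ge i$ with $\langle\alpha[j],\alpha[j+1]\rangle \models_T \mathit{step}$, then there is $k$ with $\alpha[k] \models_T \mathit{base}$; and (II) for all $\nu,\nu' \in \mathcal{A}(V)$ with $\nu \models_T \mathit{conc}$ and $\langle \nu,\nu'\rangle \models_T \mathit{step}\lor\mathit{stay}$, we have $\nu' \models_T \mathit{conc}$. Comparisons with $\pm\infty$ are interpreted in the extended reals (e.g. $-\infty \le t$ is always true). *)

theory Defs
  imports Complex_Main "HOL-Library.Extended_Real"
begin

text \<open>Assignments are total maps from variable names to reals; a formula over a finite
variable set V is modelled semantically as a predicate on assignments that only depends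
on the values of the variables in V. Two-state formulas (over V and V') take the pair
of the unprimed and primed assignment.\<close>

definition depends_on1 :: "'v set \<Rightarrow> (('v \<Rightarrow> real) \<Rightarrow> bool) \<Rightarrow> bool" where
  "depends_on1 V P \<longleftrightarrow> (\<forall>\<nu> \<mu>. (\<forall>x\<in>V. \<nu> x = \<mu> x) \<longrightarrow> P \<nu> = P \<mu>)"

definition depends_on2 :: "'v set \<Rightarrow> (('v \<Rightarrow> real) \<Rightarrow> ('v \<Rightarrow> real) \<Rightarrow> bool) \<Rightarrow> bool" where
  "depends_on2 V R \<longleftrightarrow> (\<forall>\<nu>1 \<nu>2 \<mu>1 \<mu>2. (\<forall>x\<in>V. \<nu>1 x = \<mu>1 x \<and> \<nu>2 x = \<mu>2 x)
      \<longrightarrow> R \<nu>1 \<nu>2 = R \<mu>1 \<mu>2)"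

definition lin_term :: "'v set \<Rightarrow> real \<Rightarrow> ('v \<Rightarrow> real) \<Rightarrow> ('v \<Rightarrow> real) \<Rightarrow> real" where
  "lin_term V c0 c \<nu> = c0 + (\<Sum>x\<in>V. c x * \<nu> x)"

definition is_GAL ::
  "'v set \<Rightarrow> (('v \<Rightarrow> real) \<Rightarrow> bool) \<Rightarrow> (('v \<Rightarrow> real) \<Rightarrow> ('v \<Rightarrow> real) \<Rightarrow> bool)
     \<Rightarrow> (('v \<Rightarrow> real) \<Rightarrow> ('v \<Rightarrow> real) \<Rightarrow> bool) \<Rightarrow> (('v \<Rightarrow> real) \<Rightarrow> bool) \<Rightarrow> bool" where
  "is_GAL V base stay step conc \<longleftrightarrow>
     depends_on1 V base \<and> depends_on1 V conc \<and> depends_on2 V stay \<and> depends_on2 V step \<and>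
     (\<forall>\<alpha> :: nat \<Rightarrow> ('v \<Rightarrow> real).
        conc (\<alpha> 0) \<and>
        (\<forall>i. step (\<alpha> i) (\<alpha> (Suc i)) \<or> stay (\<alpha> i) (\<alpha> (Suc i))) \<and>
        (\<forall>i. \<exists>j\<ge>i. step (\<alpha> j) (\<alpha> (Suc j)))
        \<longrightarrow> (\<exists>k. base (\<alpha> k))) \<and>
     (\<forall>\<nu> \<nu>'. conc \<nu> \<and> (step \<nu> \<nu>' \<or> stay \<nu> \<nu>') \<longrightarrow> conc \<nu>')"

end

theory Submission
  imports Defs
begin

text \<open>Since the conclusion is trivial, only the termination condition of a GAL has content, and
it concerns the real sequence of values of \<open>t\<close> alone. Outside \<open>[a, b]\<close> every transition keeps
the value on the same side of the interval and moves it monotonically towards it, by at least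
\<open>\<epsilon>\<close> at each of the infinitely many \<open>step\<close> transitions. A sequence that never enters \<open>[a, b]\<close>
would therefore be monotone with infinitely many jumps of size \<open>\<epsilon>\<close>, hence unbounded, while
staying below the finite bound \<open>a\<close> (or above the finite bound \<open>b\<close>).\<close>

definition ereal_between :: "ereal \<Rightarrow> ereal \<Rightarrow> real \<Rightarrow> bool" where
  "ereal_between a b x \<longleftrightarrow> a \<le> ereal x \<and> ereal x \<le> b"

definition toward_interval :: "ereal \<Rightarrow> ereal \<Rightarrow> real \<Rightarrow> real \<Rightarrow> real \<Rightarrow> bool" where
  "toward_interval a b \<delta> x y \<longleftrightarrow> ereal_between a b y
     \<or> (ereal x < a \<and> x + \<delta> \<le> y \<and> ereal y \<le> b)
     \<or> (ereal x > b \<and> x - \<delta> \<ge> y \<and> ereal y \<ge> a)"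

lemma toward_interval_mono:
  "\<delta> \<le> \<delta>' \<Longrightarrow> toward_interval a b \<delta>' x y \<Longrightarrow> toward_interval a b \<delta> x y"
  unfolding toward_interval_def by auto

lemma ereal_between_uminus:
  "ereal_between (- b) (- a) (- x) \<longleftrightarrow> ereal_between a b x"
  unfolding ereal_between_def by (auto simp flip: uminus_ereal.simps)

lemma toward_interval_uminus:
  "toward_interval (- b) (- a) \<delta> (- x) (- y) \<longleftrightarrow> toward_interval a b \<delta> x y"
  unfolding toward_interval_def ereal_between_def
  by (auto simp flip: uminus_ereal.simps)

lemma toward_interval_from_below:
  assumes "ereal x < a" "a \<le> b" "\<not> ereal_between a b y" "toward_interval a b \<delta> x y"
  shows "ereal y < a \<and> x + \<delta> \<le> y"
  using assms unfolding toward_interval_def ereal_between_def by (auto simp: not_le)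

lemma incseq_frequent_jumps_unbounded:
  fixes f :: "nat \<Rightarrow> real"
  assumes "incseq f" "\<epsilon> > 0" and jumps: "\<And>i. \<exists>j\<ge>i. f j + \<epsilon> \<le> f (Suc j)"
  shows "\<exists>i. B \<le> f i"
proof -
  have "\<exists>i. f 0 + real n * \<epsilon> \<le> f i" for n
  proof (induction n)
    case 0
    show ?case by auto
  next
    case (Suc n)
    then obtain i where i: "f 0 + real n * \<epsilon> \<le> f i" by blast
    obtain j where "j \<ge> i" "f j + \<epsilon> \<le> f (Suc j)" using jumps by blast
    moreover from \<open>j \<ge> i\<close> have "f i \<le> f j" using \<open>incseq f\<close> by (simp add: incseq_def)
    ultimately have "f 0 + real (Suc n) * \<epsilon> \<le> f (Suc j)" using i by (simp add: algebra_simps)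
    then show ?case by blast
  qed
  moreover obtain n where "B - f 0 < real n * \<epsilon>"
    using reals_Archimedean3 \<open>\<epsilon> > 0\<close> by blast
  ultimately obtain i where "f 0 + real n * \<epsilon> \<le> f i" by blast
  with \<open>B - f 0 < real n * \<epsilon>\<close> have "B \<le> f i" by linarith
  then show ?thesis ..
qed

lemma toward_interval_reaches_interval_from_below:
  fixes x :: "nat \<Rightarrow> real"
  assumes "a \<noteq> \<infinity>" "a \<le> b" "\<epsilon> > 0" "ereal (x 0) < a"
    and moves: "\<And>i. toward_interval a b 0 (x i) (x (Suc i))"
    and steps: "\<And>i. \<exists>j\<ge>i. toward_interval a b \<epsilon> (x j) (x (Suc j))"
  shows "\<exists>k. ereal_between a b (x k)"
proof (rule ccontr)
  assume "\<nexists>k. ereal_between a b (x k)"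
  then have outside: "\<not> ereal_between a b (x i)" for i by blast
  have below: "ereal (x i) < a" for i
  proof (induction i)
    case 0
    show ?case using \<open>ereal (x 0) < a\<close> .
  next
    case (Suc i)
    then show ?case using toward_interval_from_below[OF _ \<open>a \<le> b\<close> outside moves] by blast
  qed
  have "incseq x"
    using toward_interval_from_below[OF below \<open>a \<le> b\<close> outside moves] by (simp add: incseq_SucI)
  moreover have "\<exists>j\<ge>i. x j + \<epsilon> \<le> x (Suc j)" for i
    using steps[of i] toward_interval_from_below[OF below \<open>a \<le> b\<close> outside] by blast
  moreover obtain A where "a = ereal A"
    using \<open>a \<noteq> \<infinity>\<close> below[of 0] by (cases a) auto
  ultimately obtain i where "A \<le> x i"
    using incseq_frequent_jumps_unbounded \<open>\<epsilon> > 0\<close> by blast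
  with below[of i] \<open>a = ereal A\<close> show False by simp
qed

lemma toward_interval_reaches_interval:
  fixes x :: "nat \<Rightarrow> real"
  assumes "a \<noteq> \<infinity>" "b \<noteq> -\<infinity>" "a \<le> b" "\<epsilon> > 0"
    and moves: "\<And>i. toward_interval a b 0 (x i) (x (Suc i))"
    and steps: "\<And>i. \<exists>j\<ge>i. toward_interval a b \<epsilon> (x j) (x (Suc j))"
  shows "\<exists>k. ereal_between a b (x k)"
proof -
  consider "ereal_between a b (x 0)" | "ereal (x 0) < a" | "ereal (x 0) > b"
    unfolding ereal_between_def by fastforce
  then show ?thesis
  proof cases
    case 1
    then show ?thesis by blast
  next
    case 2
    then show ?thesis
      using toward_interval_reaches_interval_from_below assms by blast
  next
    case 3
    then have "ereal (- x 0) < - b"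
      by (simp flip: uminus_ereal.simps)
    moreover have "- b \<noteq> \<infinity>" using \<open>b \<noteq> -\<infinity>\<close> by (cases b) auto
    moreover have "- b \<le> - a" using \<open>a \<le> b\<close> by simp
    ultimately have "\<exists>k. ereal_between (- b) (- a) (- x k)"
      using toward_interval_reaches_interval_from_below[of "- b" "- a" \<epsilon> "\<lambda>i. - x i"]
        \<open>\<epsilon> > 0\<close> moves steps by (simp add: toward_interval_uminus)
    then show ?thesis by (simp add: ereal_between_uminus)
  qed
qed

lemma is_GAL_trivial_concI:
  fixes t :: "('v \<Rightarrow> real) \<Rightarrow> 'a"
  assumes t_cong: "\<And>\<nu> \<mu>. \<forall>x\<in>V. \<nu> x = \<mu> x \<Longrightarrow> t \<nu> = t \<mu>"
    and reaches: "\<And>x :: nat \<Rightarrow> 'a. \<forall>i. Step (x i) (x (Suc i)) \<or> Stay (x i) (x (Suc i)) \<Longrightarrow>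
      \<forall>i. \<exists>j\<ge>i. Step (x j) (x (Suc j)) \<Longrightarrow> \<exists>k. Base (x k)"
  shows "is_GAL V (\<lambda>\<nu>. Base (t \<nu>)) (\<lambda>\<nu> \<nu>'. Stay (t \<nu>) (t \<nu>')) (\<lambda>\<nu> \<nu>'. Step (t \<nu>) (t \<nu>'))
    (\<lambda>\<nu>. True)"
proof -
  have "depends_on1 V (\<lambda>\<nu>. Base (t \<nu>))"
    unfolding depends_on1_def using t_cong by metis
  moreover have "depends_on2 V (\<lambda>\<nu> \<nu>'. R (t \<nu>) (t \<nu>'))" for R :: "'a \<Rightarrow> 'a \<Rightarrow> bool"
    unfolding depends_on2_def using t_cong by metis
  moreover have "\<exists>k. Base (t (\<alpha> k))"
    if "\<forall>i. Step (t (\<alpha> i)) (t (\<alpha> (Suc i))) \<or> Stay (t (\<alpha> i)) (t (\<alpha> (Suc i)))"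
      "\<forall>i. \<exists>j\<ge>i. Step (t (\<alpha> j)) (t (\<alpha> (Suc j)))" for \<alpha> :: "nat \<Rightarrow> 'v \<Rightarrow> real"
    using reaches[of "\<lambda>i. t (\<alpha> i)"] that by blast
  ultimately show ?thesis
    unfolding is_GAL_def depends_on1_def by blast
qed

lemma lin_term_cong:
  "\<forall>x\<in>V. \<nu> x = \<mu> x \<Longrightarrow> lin_term V c0 c \<nu> = lin_term V c0 c \<mu>"
  unfolding lin_term_def by (auto intro!: sum.cong)

theorem lemma5:
  fixes V :: "'v set" and c0 :: real and c :: "'v \<Rightarrow> real"
    and a b :: ereal and \<epsilon> :: real
  assumes "finite V"
    and "a \<noteq> \<infinity>" and "b \<noteq> -\<infinity>" and "a \<le> b"
    and "\<epsilon> > 0"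
  shows "is_GAL V
    (\<lambda>\<nu>. a \<le> ereal (lin_term V c0 c \<nu>) \<and> ereal (lin_term V c0 c \<nu>) \<le> b)
    (\<lambda>\<nu> \<nu>'. (a \<le> ereal (lin_term V c0 c \<nu>') \<and> ereal (lin_term V c0 c \<nu>') \<le> b)
       \<or> (ereal (lin_term V c0 c \<nu>) < a \<and> lin_term V c0 c \<nu> \<le> lin_term V c0 c \<nu>'
           \<and> ereal (lin_term V c0 c \<nu>') \<le> b)
       \<or> (ereal (lin_term V c0 c \<nu>) > b \<and> lin_term V c0 c \<nu> \<ge> lin_term V c0 c \<nu>'
           \<and> ereal (lin_term V c0 c \<nu>') \<ge> a))
    (\<lambda>\<nu> \<nu>'. (a \<le> ereal (lin_term V c0 c \<nu>') \<and> ereal (lin_term V c0 c \<nu>') \<le> b)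
       \<or> (ereal (lin_term V c0 c \<nu>) < a \<and> lin_term V c0 c \<nu> + \<epsilon> \<le> lin_term V c0 c \<nu>'
           \<and> ereal (lin_term V c0 c \<nu>') \<le> b)
       \<or> (ereal (lin_term V c0 c \<nu>) > b \<and> lin_term V c0 c \<nu> - \<epsilon> \<ge> lin_term V c0 c \<nu>'
           \<and> ereal (lin_term V c0 c \<nu>') \<ge> a))
    (\<lambda>\<nu>. True)"
proof -
  let ?t = "lin_term V c0 c"
  have "is_GAL V (\<lambda>\<nu>. ereal_between a b (?t \<nu>))
    (\<lambda>\<nu> \<nu>'. toward_interval a b 0 (?t \<nu>) (?t \<nu>'))
    (\<lambda>\<nu> \<nu>'. toward_interval a b \<epsilon> (?t \<nu>) (?t \<nu>')) (\<lambda>\<nu>. True)"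
  proof (rule is_GAL_trivial_concI[OF lin_term_cong])
    fix x :: "nat \<Rightarrow> real"
    assume moves: "\<forall>i. toward_interval a b \<epsilon> (x i) (x (Suc i)) \<or> toward_interval a b 0 (x i) (x (Suc i))"
      and steps: "\<forall>i. \<exists>j\<ge>i. toward_interval a b \<epsilon> (x j) (x (Suc j))"
    have "toward_interval a b 0 (x i) (x (Suc i))" for i
      using moves toward_interval_mono[of 0 \<epsilon>] \<open>\<epsilon> > 0\<close> by (meson less_imp_le)
    then show "\<exists>k. ereal_between a b (x k)"
      using toward_interval_reaches_interval[OF assms(2-5)] steps by blast
  qed
  then show ?thesis
    by (simp only: ereal_between_def toward_interval_def add_0_right diff_0_right)
qed

end
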